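(* There is a function $\delta$ with $\delta(n)\to 0$ as $n\to\infty$ such that for every positive integer $n$ for which a regular Hadamard matrix of order $n$ exists, there exists a real orthogonal $(n+1)\times(n+1)$ matrix $M=(m_{i,j})$ with $(1-\delta(n))\frac{1}{\sqrt{n+1}}\le |m_{i,j}|\le (1+\delta(n))\frac{1}{\sqrt{n+1}}$ for all $i,j$ (i.e. all entries have modulus $(1+o(1))\frac{1}{\sqrt{n+1}}$).
   Context: A Hadamard matrix of order $n$ is an $n\times n$ matrix with entries in $\{+1,-1\}$ whose rows are pairwise orthogonal. It is called regular if all its row sums and all its column sums are equal (to one common value). *)

theory Defs
  imports Complex_Main
begin

text \<open>Square matrices of order n are represented as functions nat \<Rightarrow> nat \<Rightarrow> real,
  with only the entries with indices i, j < n being relevant.\<close>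

definition hadamard :: "nat \<Rightarrow> (nat \<Rightarrow> nat \<Rightarrow> real) \<Rightarrow> bool" where
  "hadamard n H \<longleftrightarrow>
     (\<forall>i<n. \<forall>j<n. H i j = 1 \<or> H i j = -1) \<and>
     (\<forall>i<n. \<forall>k<n. i \<noteq> k \<longrightarrow> (\<Sum>j<n. H i j * H k j) = 0)"

definition regular_hadamard :: "nat \<Rightarrow> (nat \<Rightarrow> nat \<Rightarrow> real) \<Rightarrow> bool" where
  "regular_hadamard n H \<longleftrightarrow> hadamard n H \<and>
     (\<exists>c. (\<forall>i<n. (\<Sum>j<n. H i j) = c) \<and> (\<forall>j<n. (\<Sum>i<n. H i j) = c))"

definition real_orthogonal :: "nat \<Rightarrow> (nat \<Rightarrow> nat \<Rightarrow> real) \<Rightarrow> bool" where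
  "real_orthogonal n M \<longleftrightarrow>
     (\<forall>i<n. \<forall>k<n. (\<Sum>j<n. M i j * M k j) = (if i = k then 1 else 0))"

end

theory Submission
  imports Defs
begin

text \<open>Let \<open>H\<close> be regular Hadamard of order \<open>n\<close> with common line sum \<open>c\<close>; counting
  \<open>\<Sum>\<^sub>j (\<Sum>\<^sub>i H i j)\<^sup>2\<close> via the row orthogonality gives \<open>c\<^sup>2 = n\<close>. So \<open>K = H / \<surd>n\<close> is
  orthogonal with all row sums \<open>e = c / \<surd>n = \<plusminus>1\<close>, and the all-ones vector is an
  eigenvector of \<open>K\<close>. Adding the same constant \<open>q\<close> to all entries of \<open>K\<close> and bordering
  by a row and a column of entries \<open>\<plusminus>1/\<surd>(n+1)\<close> gives an orthogonal matrix of order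
  \<open>n + 1\<close> for a suitable \<open>q = O(1/n)\<close>; its entries are \<open>\<plusminus>1/\<surd>(n+1)\<close> or
  \<open>\<plusminus>1/\<surd>n + O(1/n)\<close>, i.e. \<open>(1 + O(1/\<surd>n))/\<surd>(n+1)\<close> in modulus.\<close>

lemma hadamard_row_inner:
  assumes "hadamard n H" "i < n" "k < n"
  shows "(\<Sum>j<n. H i j * H k j) = (if i = k then real n else 0)"
proof (cases "i = k")
  case True
  have "H i j * H k j = 1" if "j < n" for j
    using assms that True unfolding hadamard_def by fastforce
  then show ?thesis
    using True by simp
qed (use assms in \<open>auto simp: hadamard_def\<close>)

lemma hadamard_column_sum_sq:
  assumes "hadamard n H" "n > 0" and col: "\<And>j. j < n \<Longrightarrow> (\<Sum>i<n. H i j) = c"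
  shows "c\<^sup>2 = real n"
proof -
  have "real n * c\<^sup>2 = (\<Sum>j<n. (\<Sum>i<n. H i j) * (\<Sum>k<n. H k j))"
    by (simp add: col power2_eq_square)
  also have "\<dots> = (\<Sum>j<n. \<Sum>i<n. \<Sum>k<n. H i j * H k j)"
    by (simp only: sum_product)
  also have "\<dots> = (\<Sum>i<n. \<Sum>j<n. \<Sum>k<n. H i j * H k j)"
    by (rule sum.swap)
  also have "\<dots> = (\<Sum>i<n. \<Sum>k<n. \<Sum>j<n. H i j * H k j)"
    by (rule sum.cong[OF refl]) (rule sum.swap)
  also have "\<dots> = (\<Sum>i<n. \<Sum>k<n. if i = k then real n else 0)"
    using assms(1) by (intro sum.cong refl) (simp add: hadamard_row_inner)
  also have "\<dots> = real n * real n"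
    by simp
  finally show ?thesis
    using \<open>n > 0\<close> by (simp add: power2_eq_square)
qed

lemma real_orthogonal_scaled_hadamard:
  assumes "hadamard n H"
  shows "real_orthogonal n (\<lambda>i j. H i j / sqrt (real n))"
  unfolding real_orthogonal_def
proof (intro allI impI)
  fix i k assume "i < n" "k < n"
  have "(\<Sum>j<n. H i j / sqrt n * (H k j / sqrt n)) = (\<Sum>j<n. H i j * H k j) / n"
    by (simp add: sum_divide_distrib)
  then show "(\<Sum>j<n. H i j / sqrt n * (H k j / sqrt n)) = (if i = k then 1 else 0)"
    using assms \<open>i < n\<close> \<open>k < n\<close> by (simp add: hadamard_row_inner)
qed

text \<open>The shift \<open>q\<close> is chosen so that every row of the shifted block sums to
  \<open>1/\<surd>(n+1)\<close>, which makes it orthogonal to the first row.\<close>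

definition bordered :: "nat \<Rightarrow> real \<Rightarrow> (nat \<Rightarrow> nat \<Rightarrow> real) \<Rightarrow> nat \<Rightarrow> nat \<Rightarrow> real" where
  "bordered n e K i j =
     (if i = 0 \<and> j = 0 then - 1 / sqrt (real n + 1)
      else if i = 0 \<or> j = 0 then 1 / sqrt (real n + 1)
      else K (i - 1) (j - 1) + (1 / sqrt (real n + 1) - e) / real n)"

lemma real_orthogonal_bordered:
  assumes K: "real_orthogonal n K" and "n > 0" and "\<bar>e\<bar> = 1"
    and row: "\<And>i. i < n \<Longrightarrow> (\<Sum>j<n. K i j) = e"
  shows "real_orthogonal (n + 1) (bordered n e K)"
proof -
  define r where "r = 1 / sqrt (real n + 1)"
  define q where "q = (r - e) / real n"
  have r2: "r\<^sup>2 * (real n + 1) = 1"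
    by (simp add: r_def power_divide)
  have row_sum: "(\<Sum>j<n. K i j + q) = r" if "i < n" for i
    using row[OF that] \<open>n > 0\<close> by (simp add: sum.distrib q_def)
  have block_inner: "(\<Sum>j<n. (K i j + q) * (K k j + q)) = (if i = k then 1 else 0) - r\<^sup>2"
    if "i < n" "k < n" for i k
  proof -
    have "(\<Sum>j<n. (K i j + q) * (K k j + q))
        = (\<Sum>j<n. K i j * K k j) + q * (\<Sum>j<n. K i j) + q * (\<Sum>j<n. K k j) + real n * q\<^sup>2"
      by (simp add: algebra_simps power2_eq_square sum.distrib sum_distrib_left)
    also have "\<dots> = (if i = k then 1 else 0) + (r\<^sup>2 - e\<^sup>2) / real n"
      using K that row \<open>n > 0\<close>
      by (simp add: real_orthogonal_def q_def field_simps power2_eq_square)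
    also have "(r\<^sup>2 - e\<^sup>2) / real n = - r\<^sup>2"
      using r2 \<open>\<bar>e\<bar> = 1\<close> \<open>n > 0\<close> by (simp add: abs_square_eq_1[symmetric] field_simps)
    finally show ?thesis
      by simp
  qed
  have B: "bordered n e K i j = (if i = 0 \<and> j = 0 then - r else if i = 0 \<or> j = 0 then r
      else K (i - 1) (j - 1) + q)" for i j
    by (simp add: bordered_def r_def q_def)
  have shift: "(\<Sum>j<n + 1. g j) = g 0 + (\<Sum>j<n. g (Suc j))" for g :: "nat \<Rightarrow> real"
    by (simp only: Suc_eq_plus1[symmetric] sum.lessThan_Suc_shift)
  show ?thesis
    unfolding real_orthogonal_def
  proof (intro allI impI)
    fix i k assume "i < n + 1" "k < n + 1"
    show "(\<Sum>j<n + 1. bordered n e K i j * bordered n e K k j) = (if i = k then 1 else 0)"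
    proof (cases i; cases k)
      assume "i = 0" "k = 0"
      then show ?thesis
        using r2 unfolding shift by (simp add: B power2_eq_square algebra_simps)
    next
      fix k' assume "i = 0" "k = Suc k'"
      then show ?thesis
        using row_sum[of k'] \<open>k < n + 1\<close> unfolding shift
        by (simp add: B sum_distrib_left[symmetric])
    next
      fix i' assume "i = Suc i'" "k = 0"
      then show ?thesis
        using row_sum[of i'] \<open>i < n + 1\<close> unfolding shift
        by (simp add: B flip: sum_distrib_right)
    next
      fix i' k' assume "i = Suc i'" "k = Suc k'"
      then show ?thesis
        using block_inner[of i' k'] \<open>i < n + 1\<close> \<open>k < n + 1\<close> unfolding shift
        by (simp add: B power2_eq_square)
    qed
  qed
qed

lemma perturbed_entry_bounds:
  fixes s t x :: real
  assumes "1 \<le> s" "s \<le> t" "t \<le> s + 1" and x: "\<bar>\<bar>x\<bar> - 1 / s\<bar> \<le> 2 / s\<^sup>2"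
  shows "(1 - 8 / s) * (1 / t) \<le> \<bar>x\<bar> \<and> \<bar>x\<bar> \<le> (1 + 8 / s) * (1 / t)"
proof -
  have "s * s \<le> t * s" "t * s \<le> s * s + s"
    using mult_right_mono[of s t s] mult_right_mono[of t "s + 1" s] assms
    by (simp_all add: algebra_simps)
  then have lower_num: "0 \<le> t * s - 2 * t - s * s + 8 * s"
    and upper_num: "0 \<le> s * s + 8 * s - t * s - 2 * t"
    using assms by linarith+
  have "1 / s - 2 / s\<^sup>2 - (1 - 8 / s) * (1 / t) = (t * s - 2 * t - s * s + 8 * s) / (s\<^sup>2 * t)"
    "(1 + 8 / s) * (1 / t) - (1 / s + 2 / s\<^sup>2) = (s * s + 8 * s - t * s - 2 * t) / (s\<^sup>2 * t)"
    using assms by (simp_all add: field_simps power2_eq_square)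
  moreover have "0 < s\<^sup>2 * t"
    using assms by simp
  ultimately have "(1 - 8 / s) * (1 / t) \<le> 1 / s - 2 / s\<^sup>2" "1 / s + 2 / s\<^sup>2 \<le> (1 + 8 / s) * (1 / t)"
    using divide_nonneg_pos[OF lower_num] divide_nonneg_pos[OF upper_num] by fastforce+
  then show ?thesis
    using x by linarith
qed

lemma bordered_entry_bounds:
  assumes "n > 0" "\<bar>e\<bar> = 1" and K: "\<And>i j. i < n \<Longrightarrow> j < n \<Longrightarrow> \<bar>K i j\<bar> = 1 / sqrt (real n)"
    and "i < n + 1" "j < n + 1"
  shows "(1 - 8 / sqrt (real n)) * (1 / sqrt (real n + 1)) \<le> \<bar>bordered n e K i j\<bar> \<and>
    \<bar>bordered n e K i j\<bar> \<le> (1 + 8 / sqrt (real n)) * (1 / sqrt (real n + 1))"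
proof (cases "i = 0 \<or> j = 0")
  case True
  then have "\<bar>bordered n e K i j\<bar> = 1 / sqrt (real n + 1)"
    by (auto simp: bordered_def)
  then show ?thesis
    by (simp add: algebra_simps)
next
  case False
  define s where "s = sqrt (real n)"
  define t where "t = sqrt (real n + 1)"
  have "1 \<le> s" "s \<le> t" "t \<le> s + 1"
    using \<open>n > 0\<close> sqrt_add_le_add_sqrt[of "real n" 1] by (simp_all add: s_def t_def)
  have "0 < 1 / t" "1 / t \<le> 1"
    using \<open>1 \<le> s\<close> \<open>s \<le> t\<close> by simp_all
  then have "\<bar>1 / t - e\<bar> \<le> 2"
    using \<open>\<bar>e\<bar> = 1\<close> by linarith
  then have "\<bar>(1 / t - e) / s\<^sup>2\<bar> \<le> 2 / s\<^sup>2"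
    using \<open>1 \<le> s\<close> by (simp add: abs_div divide_right_mono)
  moreover have "bordered n e K i j = K (i - 1) (j - 1) + (1 / t - e) / s\<^sup>2"
    using False by (simp add: bordered_def s_def t_def)
  moreover have "\<bar>K (i - 1) (j - 1)\<bar> = 1 / s"
    using K[of "i - 1" "j - 1"] False assms(4,5) unfolding s_def by fastforce
  ultimately have "\<bar>\<bar>bordered n e K i j\<bar> - 1 / s\<bar> \<le> 2 / s\<^sup>2"
    using abs_triangle_ineq3[of "bordered n e K i j" "K (i - 1) (j - 1)"] by simp
  then show ?thesis
    using perturbed_entry_bounds \<open>1 \<le> s\<close> \<open>s \<le> t\<close> \<open>t \<le> s + 1\<close> by (simp add: s_def t_def)
qed

lemma tendsto_divide_sqrt_0: "(\<lambda>n. a / sqrt (real n)) \<longlonglongrightarrow> 0"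
proof -
  have "filterlim (\<lambda>n. sqrt (real n)) at_top sequentially"
    using filterlim_compose[OF sqrt_at_top filterlim_real_sequentially] .
  then show ?thesis
    by (intro tendsto_divide_0[OF tendsto_const] filterlim_at_top_imp_at_infinity)
qed

theorem proposition3p5:
  shows "\<exists>\<delta> :: nat \<Rightarrow> real. \<delta> \<longlonglongrightarrow> 0 \<and>
    (\<forall>n>0. (\<exists>H. regular_hadamard n H) \<longrightarrow>
       (\<exists>M. real_orthogonal (n + 1) M \<and>
          (\<forall>i<n + 1. \<forall>j<n + 1.
             (1 - \<delta> n) * (1 / sqrt (real n + 1)) \<le> \<bar>M i j\<bar> \<and>
             \<bar>M i j\<bar> \<le> (1 + \<delta> n) * (1 / sqrt (real n + 1)))))"
proof (rule exI[of _ "\<lambda>n. 8 / sqrt (real n)"], intro conjI allI impI)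
  show "(\<lambda>n. 8 / sqrt (real n)) \<longlonglongrightarrow> 0"
    by (rule tendsto_divide_sqrt_0)
next
  fix n :: nat assume "n > 0" "\<exists>H. regular_hadamard n H"
  then obtain H c where "hadamard n H"
    and row: "\<And>i. i < n \<Longrightarrow> (\<Sum>j<n. H i j) = c" and col: "\<And>j. j < n \<Longrightarrow> (\<Sum>i<n. H i j) = c"
    unfolding regular_hadamard_def by blast
  define e where "e = c / sqrt (real n)"
  define K where "K = (\<lambda>i j. H i j / sqrt (real n))"
  have "c\<^sup>2 = real n"
    using hadamard_column_sum_sq \<open>hadamard n H\<close> \<open>n > 0\<close> col by blast
  then have "e\<^sup>2 = 1"
    using \<open>n > 0\<close> by (simp add: e_def power_divide)
  then have "\<bar>e\<bar> = 1"
    by (simp add: abs_square_eq_1)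
  have "real_orthogonal (n + 1) (bordered n e K)"
  proof (rule real_orthogonal_bordered[OF _ \<open>n > 0\<close> \<open>\<bar>e\<bar> = 1\<close>])
    show "real_orthogonal n K"
      unfolding K_def using \<open>hadamard n H\<close> by (rule real_orthogonal_scaled_hadamard)
    show "(\<Sum>j<n. K i j) = e" if "i < n" for i
      using row[OF that] by (simp add: K_def e_def sum_divide_distrib[symmetric])
  qed
  moreover have "\<bar>K i j\<bar> = 1 / sqrt (real n)" if "i < n" "j < n" for i j
    using \<open>hadamard n H\<close> that unfolding hadamard_def K_def by force
  ultimately show "\<exists>M. real_orthogonal (n + 1) M \<and> (\<forall>i<n + 1. \<forall>j<n + 1.
      (1 - 8 / sqrt (real n)) * (1 / sqrt (real n + 1)) \<le> \<bar>M i j\<bar> \<and>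
      \<bar>M i j\<bar> \<le> (1 + 8 / sqrt (real n)) * (1 / sqrt (real n + 1)))"
    using bordered_entry_bounds \<open>n > 0\<close> \<open>\<bar>e\<bar> = 1\<close> by blast
qed

end
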